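(* Every filter $\mathcal{F}$ on $\omega$ (viewed as a subspace of $2^\omega$) is strongly homogeneous.
   Context: A filter on $\omega$ is $\mathcal{F}\subseteq\mathcal{P}(\omega)$ with $\varnothing\notin\mathcal{F}$, $\omega\in\mathcal{F}$, closed under finite modifications (if $x\in\mathcal{F}$ and $y$ differs from $x$ by a finite set then $y\in\mathcal{F}$), upward-closed, and closed under finite intersections; it is identified via characteristic functions with a subspace of $2^\omega$. A space $X$ is strongly homogeneous if every non-empty clopen subspace of $X$ is homeomorphic to $X$. *)

theory Defs
  imports "HOL-Analysis.Analysis"
begin

text \<open>A filter on omega (containing the Frechet filter, i.e. closed under finite modifications).\<close>
definition filter_on_omega :: "nat set set \<Rightarrow> bool" where
  "filter_on_omega F \<longleftrightarrow>
     {} \<notin> F \<and> UNIV \<in> F \<and>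
     (\<forall>x\<in>F. \<forall>y. finite ((x - y) \<union> (y - x)) \<longrightarrow> y \<in> F) \<and>
     (\<forall>x\<in>F. \<forall>y. x \<subseteq> y \<longrightarrow> y \<in> F) \<and>
     (\<forall>x\<in>F. \<forall>y\<in>F. x \<inter> y \<in> F)"

definition cantor_space :: "(nat \<Rightarrow> bool) topology" where
  "cantor_space = product_topology (\<lambda>_. discrete_topology (UNIV :: bool set)) UNIV"

definition char_fun :: "nat set \<Rightarrow> (nat \<Rightarrow> bool)" where
  "char_fun x = (\<lambda>n. n \<in> x)"

definition strongly_homogeneous :: "'a topology \<Rightarrow> bool" where
  "strongly_homogeneous X \<longleftrightarrow>
     (\<forall>U. U \<noteq> {} \<and> openin X U \<and> closedin X U \<longrightarrow> subtopology X U homeomorphic_space X)"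

end

theory Submission
  imports Defs
begin

text \<open>For every \<open>n\<close> there is a bijection \<open>\<beta>\<close> of \<open>\<omega>\<close> onto \<open>[n, \<omega>)\<close> with
  \<open>\<beta>[x] \<in> \<F> \<longleftrightarrow> x \<in> \<F>\<close>: it fixes a coinfinite member of \<open>\<F>\<close> pointwise, or, if \<open>\<F>\<close> is
  the cofinite filter, it is a shift. Prescribing the first \<open>n\<close> bits and transporting the
  rest along \<open>\<beta>\<close> shows that \<open>\<F>\<close> is homeomorphic to its trace on any basic cylinder.
  A non-empty open subset of \<open>\<F>\<close> is the disjoint union of countably many such traces (the
  maximal cylinders around its points), and \<open>\<F>\<close> itself splits into equally many, so the
  homeomorphisms can be glued piecewise.\<close>

definition cylinder :: "nat \<Rightarrow> (nat \<Rightarrow> bool) \<Rightarrow> (nat \<Rightarrow> bool) set" where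
  "cylinder n s = {f. \<forall>i<n. f i = s i}"

lemma topspace_cantor_space [simp]: "topspace cantor_space = UNIV"
  by (simp add: cantor_space_def)

lemma openin_cantor_space_cylinder: "openin cantor_space (cylinder n s)"
  unfolding cantor_space_def openin_product_topology_alt
proof (intro ballI exI conjI)
  fix f assume f: "f \<in> cylinder n s"
  define U where "U i = (if i < n then {s i} else UNIV)" for i
  have "{i. U i \<noteq> UNIV} \<subseteq> {..<n}"
    by (auto simp: U_def)
  then show "finite {i \<in> UNIV. U i \<noteq> topspace (discrete_topology UNIV)}"
    by (auto intro: finite_subset)
  show "f \<in> Pi\<^sub>E UNIV U"
    using f by (simp add: U_def cylinder_def PiE_iff)
  show "Pi\<^sub>E UNIV U \<subseteq> cylinder n s"
  proof
    fix g assume "g \<in> Pi\<^sub>E UNIV U"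
    then have "g i \<in> U i" for i
      by (simp add: PiE_iff)
    then show "g \<in> cylinder n s"
      by (simp add: U_def cylinder_def) (metis singletonD)
  qed
qed auto

lemma openin_cantor_space_contains_cylinder:
  assumes "openin cantor_space W" "f \<in> W"
  obtains n where "cylinder n f \<subseteq> W"
proof -
  obtain U where fin: "finite {i. U i \<noteq> UNIV}" and "f \<in> Pi\<^sub>E UNIV U" "Pi\<^sub>E UNIV U \<subseteq> W"
    using assms unfolding cantor_space_def openin_product_topology_alt by auto
  obtain n where n: "{i. U i \<noteq> UNIV} \<subseteq> {..<n}"
    using finite_nat_bounded[OF fin] by blast
  have "cylinder n f \<subseteq> Pi\<^sub>E UNIV U"
  proof
    fix g assume g: "g \<in> cylinder n f"
    have "g i \<in> U i" for i
    proof (cases "U i = UNIV")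
      case False
      then have "g i = f i"
        using n g by (auto simp: cylinder_def)
      then show ?thesis
        using \<open>f \<in> Pi\<^sub>E UNIV U\<close> by (simp add: PiE_iff)
    qed simp
    then show "g \<in> Pi\<^sub>E UNIV U"
      by (simp add: PiE_iff)
  qed
  then show thesis
    using \<open>Pi\<^sub>E UNIV U \<subseteq> W\<close> that by (meson subset_trans)
qed

lemma continuous_map_cantor_space_coordinatewise:
  assumes "\<And>i. (\<exists>c. \<forall>f. \<Phi> f i = c) \<or> (\<exists>j. \<forall>f. \<Phi> f i = f j)"
  shows "continuous_map cantor_space cantor_space \<Phi>"
  unfolding cantor_space_def continuous_map_componentwise_UNIV
proof
  fix i
  show "continuous_map (product_topology (\<lambda>_. discrete_topology UNIV) UNIV) (discrete_topology UNIV)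
          (\<lambda>f. \<Phi> f i)"
    using assms[of i]
  proof (elim disjE exE)
    fix j assume "\<forall>f. \<Phi> f i = f j"
    then show ?thesis
      using continuous_map_product_projection[of j UNIV "\<lambda>_. discrete_topology UNIV"] by simp
  qed (simp add: continuous_map_const)
qed

lemma filter_on_omega_finite_modification_iff:
  assumes "filter_on_omega F" "finite ((x - y) \<union> (y - x))"
  shows "x \<in> F \<longleftrightarrow> y \<in> F"
proof -
  have "finite ((y - x) \<union> (x - y))"
    using assms(2) by (simp add: Un_commute)
  then show ?thesis
    using assms unfolding filter_on_omega_def by blast
qed

lemma filter_on_omega_Int_iff:
  assumes "filter_on_omega F" "A \<in> F"
  shows "x \<inter> A \<in> F \<longleftrightarrow> x \<in> F"
  using assms unfolding filter_on_omega_def by (metis Int_lower1)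

lemma filter_on_omega_cofinite:
  assumes F: "filter_on_omega F" and "\<forall>A\<in>F. finite (- A)"
  shows "x \<in> F \<longleftrightarrow> finite (- x)"
proof
  assume "finite (- x)"
  moreover have "UNIV \<in> F" "(UNIV - x) \<union> (x - UNIV) = - x"
    using F by (auto simp: filter_on_omega_def)
  ultimately show "x \<in> F"
    using filter_on_omega_finite_modification_iff[OF F] by metis
qed (use assms in blast)

lemma filter_on_omega_image_iff:
  assumes F: "filter_on_omega F" and "A \<in> F"
    and fix_A: "\<And>i. i \<in> A \<Longrightarrow> \<beta> i = i" and "\<beta> ` (- A) \<subseteq> - A"
  shows "\<beta> ` x \<in> F \<longleftrightarrow> x \<in> F"
proof -
  have "\<beta> ` x \<inter> A = x \<inter> A"
  proof (intro set_eqI iffI)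
    fix i assume "i \<in> \<beta> ` x \<inter> A"
    then obtain j where "j \<in> x" "i = \<beta> j" "i \<in> A"
      by blast
    then show "i \<in> x \<inter> A"
      using fix_A \<open>\<beta> ` (- A) \<subseteq> - A\<close> by (cases "j \<in> A") auto
  next
    fix i assume "i \<in> x \<inter> A"
    then show "i \<in> \<beta> ` x \<inter> A"
      using fix_A by (metis IntD1 IntD2 IntI imageI)
  qed
  then show ?thesis
    using filter_on_omega_Int_iff[OF F \<open>A \<in> F\<close>] by metis
qed

lemma filter_on_omega_shift_fixing:
  assumes F: "filter_on_omega F" and "A \<in> F" "infinite (- A)"
  obtains \<beta> where "bij_betw \<beta> UNIV {n..}" "\<And>x. \<beta> ` x \<in> F \<longleftrightarrow> x \<in> F"
proof -
  define A' where "A' = A - {..<n}"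
  have "finite ((A - A') \<union> (A' - A))"
    by (auto simp: A'_def intro: finite_subset[of _ "{..<n}"])
  then have "A' \<in> F"
    using filter_on_omega_finite_modification_iff[OF F] \<open>A \<in> F\<close> by blast
  have "infinite (- A')"
    using \<open>infinite (- A)\<close> by (auto simp: A'_def intro: infinite_super)
  moreover have "- A - {..<n} \<subseteq> {n..} - A'"
    by (auto simp: A'_def)
  then have "infinite ({n..} - A')"
    using \<open>infinite (- A)\<close> by (meson Diff_infinite_finite finite_lessThan infinite_super)
  ultimately obtain h where h: "bij_betw h (- A') ({n..} - A')"
    by (meson bij_betw_from_nat_into bij_betw_trans countableI_type countable_subset
        subset_UNIV to_nat_on_infinite)
  define \<beta> where "\<beta> i = (if i \<in> A' then i else h i)" for i
  have "bij_betw \<beta> (A' \<union> - A') (A' \<union> ({n..} - A'))"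
    unfolding \<beta>_def by (rule bij_betw_disjoint_Un[OF bij_betw_id[unfolded id_def] h]) auto
  moreover have "A' \<union> ({n..} - A') = {n..}"
    by (auto simp: A'_def)
  ultimately have "bij_betw \<beta> UNIV {n..}"
    by simp
  moreover have "\<beta> ` (- A') \<subseteq> - A'"
    using h by (auto simp: \<beta>_def bij_betw_def)
  moreover have "\<beta> i = i" if "i \<in> A'" for i
    using that by (simp add: \<beta>_def)
  ultimately show thesis
    using that filter_on_omega_image_iff[OF F \<open>A' \<in> F\<close>] by blast
qed

lemma cofinite_shift:
  fixes F :: "nat set set" and n :: nat
  assumes cofinite: "\<And>x. x \<in> F \<longleftrightarrow> finite (- x)"
  obtains \<beta> where "bij_betw \<beta> UNIV {n..}" "\<And>x. \<beta> ` x \<in> F \<longleftrightarrow> x \<in> F"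
proof -
  define \<beta> where "\<beta> i = i + n" for i
  have mem_image: "i \<in> \<beta> ` y \<longleftrightarrow> n \<le> i \<and> i - n \<in> y" for i y
    by (auto simp: \<beta>_def image_iff intro: bexI[of _ "i - n"])
  have "bij_betw \<beta> UNIV {n..}"
    using mem_image[of _ UNIV] by (auto simp: bij_betw_def inj_on_def \<beta>_def)
  moreover have "- (\<beta> ` x) = {..<n} \<union> \<beta> ` (- x)" for x
    by (auto simp: set_eq_iff mem_image)
  moreover have "finite (\<beta> ` y) \<longleftrightarrow> finite y" for y
    by (simp add: \<beta>_def finite_image_iff inj_on_def)
  ultimately show thesis
    using that cofinite by simp
qed

lemma filter_on_omega_shift:
  assumes F: "filter_on_omega F"
  obtains \<beta> where "bij_betw \<beta> UNIV {n..}" "\<And>x. \<beta> ` x \<in> F \<longleftrightarrow> x \<in> F"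
proof (cases "\<exists>A\<in>F. infinite (- A)")
  case True
  then obtain A where "A \<in> F" "infinite (- A)"
    by blast
  then show thesis
    by (rule filter_on_omega_shift_fixing[OF F]) (rule that)
next
  case False
  then have "x \<in> F \<longleftrightarrow> finite (- x)" for x
    using filter_on_omega_cofinite[OF F] by blast
  then show thesis
    by (rule cofinite_shift) (rule that)
qed

lemma mem_char_fun_image_iff: "f \<in> char_fun ` F \<longleftrightarrow> Collect f \<in> F"
proof
  assume "Collect f \<in> F"
  moreover have "f = char_fun (Collect f)"
    by (simp add: char_fun_def)
  ultimately show "f \<in> char_fun ` F"
    by blast
qed (auto simp: char_fun_def)

lemma filter_cylinder_homeomorphic:
  assumes F: "filter_on_omega F"
  shows "subtopology cantor_space (char_fun ` F \<inter> cylinder n \<sigma>)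
           homeomorphic_space subtopology cantor_space (char_fun ` F)"
proof -
  obtain \<beta> where "bij_betw \<beta> UNIV {n..}" and \<beta>_mem: "\<And>x. \<beta> ` x \<in> F \<longleftrightarrow> x \<in> F"
    using filter_on_omega_shift[OF F] by blast
  then have "inj \<beta>" and range_\<beta>: "range \<beta> = {n..}"
    by (auto simp: bij_betw_def)
  have \<beta>_ge: "n \<le> \<beta> j" for j
    using range_\<beta> by auto
  define \<gamma> where "\<gamma> = inv_into UNIV \<beta>"
  have \<gamma>_\<beta>: "\<gamma> (\<beta> j) = j" for j
    using \<open>inj \<beta>\<close> by (simp add: \<gamma>_def)
  have \<beta>_\<gamma>: "n \<le> i \<Longrightarrow> \<beta> (\<gamma> i) = i" for i
    using range_\<beta> by (simp add: \<gamma>_def f_inv_into_f)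
  define \<Phi> where "\<Phi> f = (\<lambda>i. if i < n then \<sigma> i else f (\<gamma> i))" for f :: "nat \<Rightarrow> bool"
  define \<Psi> where "\<Psi> g = (\<lambda>j. g (\<beta> j))" for g :: "nat \<Rightarrow> bool"
  have "continuous_map cantor_space cantor_space \<Phi>"
    by (rule continuous_map_cantor_space_coordinatewise) (auto simp: \<Phi>_def)
  moreover have "continuous_map cantor_space cantor_space \<Psi>"
    by (rule continuous_map_cantor_space_coordinatewise) (auto simp: \<Psi>_def)
  moreover have "\<Phi> f \<in> char_fun ` F \<longleftrightarrow> f \<in> char_fun ` F" for f
  proof -
    have "Collect (\<Phi> f) = {i. i < n \<and> \<sigma> i} \<union> \<beta> ` Collect f"
      using \<beta>_ge \<beta>_\<gamma> \<gamma>_\<beta> by (auto simp: \<Phi>_def image_iff) (metis not_less)+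
    then have "finite ((Collect (\<Phi> f) - \<beta> ` Collect f) \<union> (\<beta> ` Collect f - Collect (\<Phi> f)))"
      by (auto intro: finite_subset[of _ "{..<n}"])
    then show ?thesis
      unfolding mem_char_fun_image_iff
      using filter_on_omega_finite_modification_iff[OF F] \<beta>_mem by blast
  qed
  moreover have "\<Psi> g \<in> char_fun ` F \<longleftrightarrow> g \<in> char_fun ` F" for g
  proof -
    have "\<beta> ` Collect (\<Psi> g) = Collect g \<inter> {n..}"
      using range_\<beta> by (auto simp: \<Psi>_def)
    moreover have "finite ((Collect g \<inter> {n..} - Collect g) \<union> (Collect g - Collect g \<inter> {n..}))"
      by (auto intro: finite_subset[of _ "{..<n}"])
    ultimately show ?thesis
      unfolding mem_char_fun_image_iff
      using filter_on_omega_finite_modification_iff[OF F] \<beta>_mem by metis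
  qed
  moreover have "\<Phi> f \<in> cylinder n \<sigma>" for f
    by (simp add: \<Phi>_def cylinder_def)
  moreover have "\<Psi> (\<Phi> f) = f" for f
    using \<beta>_ge \<gamma>_\<beta> by (simp add: \<Phi>_def \<Psi>_def not_less[symmetric])
  moreover have "\<Phi> (\<Psi> g) = g" if "g \<in> cylinder n \<sigma>" for g
    using that \<beta>_\<gamma> by (auto simp: \<Phi>_def \<Psi>_def cylinder_def not_less)
  ultimately have "homeomorphic_maps (subtopology cantor_space (char_fun ` F))
      (subtopology cantor_space (char_fun ` F \<inter> cylinder n \<sigma>)) \<Phi> \<Psi>"
    by (auto simp: homeomorphic_maps_def continuous_map_in_subtopology continuous_map_from_subtopology)
  then show ?thesis
    using homeomorphic_space_def homeomorphic_space_sym by blast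
qed

lemma continuous_map_paste_disjoint_open_cover:
  assumes open_U: "\<And>i. i \<in> I \<Longrightarrow> openin X (U i)" and disj: "disjoint_family_on U I"
    and cover: "(\<Union>i\<in>I. U i) = topspace X"
    and cont: "\<And>i. i \<in> I \<Longrightarrow> continuous_map (subtopology X (U i)) Y (f i)"
  obtains F where "continuous_map X Y F" "\<And>i x. \<lbrakk>i \<in> I; x \<in> U i\<rbrakk> \<Longrightarrow> F x = f i x"
proof -
  have agree: "f i x = f j x" if "i \<in> I" "j \<in> I" "x \<in> topspace X \<inter> U i \<inter> U j" for i j x
    using that disjoint_family_onD[OF disj, of i j] by (cases "i = j") auto
  obtain F where "continuous_map X Y F"
    and F_eq: "\<And>x i. \<lbrakk>i \<in> I; x \<in> topspace X \<inter> U i\<rbrakk> \<Longrightarrow> F x = f i x"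
    by (rule pasting_lemma_exists[where T = U and I = I, OF _ open_U cont agree]) (use cover in auto)
  moreover have "F x = f i x" if "i \<in> I" "x \<in> U i" for i x
    using F_eq[OF that(1)] that cover by blast
  ultimately show thesis
    using that by blast
qed

lemma homeomorphic_space_disjoint_open_covers:
  assumes open_U: "\<And>i. i \<in> I \<Longrightarrow> openin X (U i)" and open_V: "\<And>i. i \<in> I \<Longrightarrow> openin Y (V i)"
    and disj_U: "disjoint_family_on U I" and disj_V: "disjoint_family_on V I"
    and cover_U: "(\<Union>i\<in>I. U i) = topspace X" and cover_V: "(\<Union>i\<in>I. V i) = topspace Y"
    and homeo: "\<And>i. i \<in> I \<Longrightarrow> subtopology X (U i) homeomorphic_space subtopology Y (V i)"
  shows "X homeomorphic_space Y"
proof -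
  obtain f g where fg: "\<And>i. i \<in> I \<Longrightarrow>
      homeomorphic_maps (subtopology X (U i)) (subtopology Y (V i)) (f i) (g i)"
    using homeo unfolding homeomorphic_space_def by metis
  have U_sub: "U i \<subseteq> topspace X" and V_sub: "V i \<subseteq> topspace Y" if "i \<in> I" for i
    using open_U open_V that by (auto dest: openin_subset)
  have f: "continuous_map (subtopology X (U i)) (subtopology Y (V i)) (f i)"
    and g: "continuous_map (subtopology Y (V i)) (subtopology X (U i)) (g i)"
    and gf: "\<And>x. x \<in> U i \<Longrightarrow> g i (f i x) = x"
    and fg_id: "\<And>y. y \<in> V i \<Longrightarrow> f i (g i y) = y" if "i \<in> I" for i
    using fg[OF that] U_sub[OF that] V_sub[OF that]
    by (auto simp: homeomorphic_maps_def Int_absorb2)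
  have f_into: "f i x \<in> V i" if "i \<in> I" "x \<in> U i" for i x
    using continuous_map_image_subset_topspace[OF f[OF that(1)]] U_sub[OF that(1)] that(2)
    by (auto simp: Int_absorb2)
  have g_into: "g i y \<in> U i" if "i \<in> I" "y \<in> V i" for i y
    using continuous_map_image_subset_topspace[OF g[OF that(1)]] V_sub[OF that(1)] that(2)
    by (auto simp: Int_absorb2)
  obtain F where F: "continuous_map X Y F" and F_eq: "\<And>i x. \<lbrakk>i \<in> I; x \<in> U i\<rbrakk> \<Longrightarrow> F x = f i x"
    using continuous_map_paste_disjoint_open_cover[OF open_U disj_U cover_U
        continuous_map_into_fulltopology[OF f]] by blast
  obtain G where G: "continuous_map Y X G" and G_eq: "\<And>i y. \<lbrakk>i \<in> I; y \<in> V i\<rbrakk> \<Longrightarrow> G y = g i y"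
    using continuous_map_paste_disjoint_open_cover[OF open_V disj_V cover_V
        continuous_map_into_fulltopology[OF g]] by blast
  have "homeomorphic_maps X Y F G"
    unfolding homeomorphic_maps_def
  proof (intro conjI F G ballI)
    fix x assume "x \<in> topspace X"
    then obtain i where i: "i \<in> I" "x \<in> U i"
      using cover_U by blast
    then show "G (F x) = x"
      using F_eq[OF i] G_eq[OF \<open>i \<in> I\<close> f_into[OF i]] gf[OF i] by simp
  next
    fix y assume "y \<in> topspace Y"
    then obtain i where i: "i \<in> I" "y \<in> V i"
      using cover_V by blast
    then show "F (G y) = y"
      using G_eq[OF i] F_eq[OF \<open>i \<in> I\<close> g_into[OF i]] fg_id[OF i] by simp
  qed
  then show ?thesis
    unfolding homeomorphic_space_def by blast
qed

lemma cylinder_cong: "(\<And>i. i < n \<Longrightarrow> f i = g i) \<Longrightarrow> cylinder n f = cylinder n g"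
  by (simp add: cylinder_def)

lemma countable_cylinders: "countable {cylinder n \<sigma> | n \<sigma>. True}"
proof -
  let ?C = "\<lambda>(n, s). cylinder n (\<lambda>i. i \<in> s)"
  have "cylinder n \<sigma> \<in> ?C ` (UNIV \<times> Collect finite)" for n \<sigma>
  proof
    show "cylinder n \<sigma> = ?C (n, {j. j < n \<and> \<sigma> j})"
      by (simp add: cylinder_def)
  qed simp
  then have "{cylinder n \<sigma> | n \<sigma>. True} \<subseteq> ?C ` (UNIV \<times> Collect finite)"
    by blast
  moreover have "countable ((UNIV :: nat set) \<times> Collect (finite :: nat set \<Rightarrow> bool))"
    using countable_Collect_finite by (intro countable_SIGMA) (auto intro: countableI_type)
  ultimately show ?thesis
    by (rule countable_subset[OF _ countable_image])
qed

definition cylinder_depth :: "(nat \<Rightarrow> bool) set \<Rightarrow> (nat \<Rightarrow> bool) set \<Rightarrow> (nat \<Rightarrow> bool) \<Rightarrow> nat" where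
  "cylinder_depth S U g = (LEAST m. S \<inter> cylinder m g \<subseteq> U)"

lemma cylinder_depth_subset:
  "S \<inter> cylinder m g \<subseteq> U \<Longrightarrow> S \<inter> cylinder (cylinder_depth S U g) g \<subseteq> U"
  unfolding cylinder_depth_def by (rule LeastI)

lemma cylinder_depth_cong:
  assumes "S \<inter> cylinder m g \<subseteq> U" and h: "h \<in> cylinder (cylinder_depth S U g) g"
  shows "cylinder_depth S U h = cylinder_depth S U g"
proof -
  have same: "cylinder m h = cylinder m g" if "m \<le> cylinder_depth S U g" for m
    using h that by (intro cylinder_cong) (auto simp: cylinder_def)
  show ?thesis
    unfolding cylinder_depth_def[of S U h]
  proof (rule Least_equality)
    show "S \<inter> cylinder (cylinder_depth S U g) h \<subseteq> U"
      using cylinder_depth_subset[OF assms(1)] same by simp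
    show "cylinder_depth S U g \<le> m" if "S \<inter> cylinder m h \<subseteq> U" for m
    proof (rule ccontr)
      assume "\<not> cylinder_depth S U g \<le> m"
      moreover from this have "S \<inter> cylinder m g \<subseteq> U"
        using that same[of m] by simp
      ultimately show False
        using not_less_Least[of m "\<lambda>m. S \<inter> cylinder m g \<subseteq> U"] by (simp add: cylinder_depth_def)
    qed
  qed
qed

text \<open>Two maximal cylinders around points of \<open>U\<close> are equal or disjoint, because every point
  of such a cylinder has the same maximal cylinder.\<close>
lemma openin_subspace_cylinder_partition:
  assumes "openin (subtopology cantor_space S) U"
  obtains M where "partition_on U M" "countable M" "\<And>P. P \<in> M \<Longrightarrow> \<exists>n \<sigma>. P = S \<inter> cylinder n \<sigma>"
proof -
  obtain W where "openin cantor_space W" and U: "U = W \<inter> S"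
    using assms openin_subtopology by metis
  define piece where "piece g = S \<inter> cylinder (cylinder_depth S U g) g" for g
  have cylinder_in_U: "\<exists>m. S \<inter> cylinder m g \<subseteq> U" if "g \<in> U" for g
  proof -
    obtain m where "cylinder m g \<subseteq> W"
      using openin_cantor_space_contains_cylinder \<open>openin cantor_space W\<close> \<open>g \<in> U\<close> U by blast
    then show ?thesis
      using U by blast
  qed
  have piece_sub: "piece g \<subseteq> U" if "g \<in> U" for g
    using cylinder_in_U[OF that] cylinder_depth_subset unfolding piece_def by blast
  have piece_eq: "piece h = piece g" if "g \<in> U" "h \<in> piece g" for g h
  proof -
    obtain m where "S \<inter> cylinder m g \<subseteq> U"
      using cylinder_in_U[OF \<open>g \<in> U\<close>] by blast
    moreover have h: "h \<in> cylinder (cylinder_depth S U g) g"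
      using \<open>h \<in> piece g\<close> by (simp add: piece_def)
    ultimately have "cylinder_depth S U h = cylinder_depth S U g"
      by (rule cylinder_depth_cong)
    moreover have "cylinder (cylinder_depth S U g) h = cylinder (cylinder_depth S U g) g"
      using h by (intro cylinder_cong) (simp add: cylinder_def)
    ultimately show ?thesis
      by (simp add: piece_def)
  qed
  have self_in_piece: "g \<in> piece g" if "g \<in> U" for g
    using that U by (simp add: piece_def cylinder_def)
  show thesis
  proof
    show "partition_on U (piece ` U)"
    proof (rule partition_onI)
      show "\<Union> (piece ` U) = U"
        using piece_sub self_in_piece by blast
      show "disjnt P Q" if PQ: "P \<in> piece ` U" "Q \<in> piece ` U" and "P \<noteq> Q" for P Q
      proof -
        obtain g h where "g \<in> U" "h \<in> U" "P = piece g" "Q = piece h"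
          using PQ by blast
        then have "piece x = P" "piece x = Q" if "x \<in> P" "x \<in> Q" for x
          using piece_eq[of g x] piece_eq[of h x] that by auto
        then show ?thesis
          using \<open>P \<noteq> Q\<close> by (auto simp: disjnt_def)
      qed
      show "{} \<notin> piece ` U"
        using self_in_piece by blast
    qed
    have "piece ` U \<subseteq> (\<inter>) S ` {cylinder n \<sigma> | n \<sigma>. True}"
      unfolding piece_def by blast
    then show "countable (piece ` U)"
      by (rule countable_subset[OF _ countable_image[OF countable_cylinders]])
    show "\<exists>n \<sigma>. P = S \<inter> cylinder n \<sigma>" if "P \<in> piece ` U" for P
      using that unfolding piece_def by blast
  qed
qed

text \<open>Piece \<open>j\<close> consists of the sequences whose first nonzero bit is \<open>j\<close>, except that
  for \<open>I = {..<k}\<close> the last piece takes all sequences vanishing below \<open>k - 1\<close>.\<close>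
lemma disjoint_cylinders_cover_nonzero:
  fixes I :: "nat set"
  assumes I: "(I = {..<k} \<and> 0 < k) \<or> I = UNIV"
  obtains C where "\<And>j. j \<in> I \<Longrightarrow> \<exists>n \<sigma>. C j = cylinder n \<sigma>" "disjoint_family_on C I"
    "- {\<lambda>_. False} \<subseteq> (\<Union>j\<in>I. C j)"
proof
  define C where
    "C j = (if Suc j \<in> I then cylinder (Suc j) (\<lambda>i. i = j) else cylinder j (\<lambda>_. False))" for j
  show "\<exists>n \<sigma>. C j = cylinder n \<sigma>" for j
    by (auto simp: C_def)
  have disj_less: "C i \<inter> C j = {}" if "i < j" "j \<in> I" for i j
  proof -
    have "Suc i \<in> I"
      using I that by auto
    then have "C i \<subseteq> {g. g i}" "C j \<subseteq> {g. \<not> g i}"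
      using \<open>i < j\<close> by (auto simp: C_def cylinder_def)
    then show ?thesis
      by blast
  qed
  show "disjoint_family_on C I"
    unfolding disjoint_family_on_def
  proof (intro ballI impI)
    fix i j assume "i \<in> I" "j \<in> I" "i \<noteq> j"
    then consider "i < j" | "j < i"
      by linarith
    then show "C i \<inter> C j = {}"
      using disj_less[of i j] disj_less[of j i] \<open>i \<in> I\<close> \<open>j \<in> I\<close> by cases (simp_all add: Int_commute)
  qed
  show "- {\<lambda>_. False} \<subseteq> (\<Union>j\<in>I. C j)"
  proof
    fix g :: "nat \<Rightarrow> bool"
    assume "g \<in> - {\<lambda>_. False}"
    then have "\<exists>i. g i"
      by auto
    define m where "m = (LEAST i. g i)"
    have "g m" "\<And>i. i < m \<Longrightarrow> \<not> g i"
      unfolding m_def using \<open>\<exists>i. g i\<close> by (auto intro: LeastI_ex dest: not_less_Least)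
    show "g \<in> (\<Union>j\<in>I. C j)"
    proof (cases "m \<in> I")
      case True
      then have "g \<in> C m"
        using \<open>g m\<close> \<open>\<And>i. i < m \<Longrightarrow> \<not> g i\<close> by (auto simp: C_def cylinder_def less_Suc_eq)
      with True show ?thesis
        by blast
    next
      case False
      then have "I = {..<k}" "0 < k" "k \<le> m"
        using I by auto
      then have "g \<in> C (k - 1)" "k - 1 \<in> I"
        using \<open>\<And>i. i < m \<Longrightarrow> \<not> g i\<close> by (auto simp: C_def cylinder_def)
      then show ?thesis
        by blast
    qed
  qed
qed

lemma countable_nonempty_enumeration:
  assumes "countable M" "M \<noteq> {}"
  obtains I :: "nat set" and k e where "(I = {..<k} \<and> 0 < k) \<or> I = UNIV" "bij_betw e I M"
proof (cases "finite M")
  case True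
  show thesis
  proof (rule that[of "{..<card M}" "card M" "from_nat_into M"])
    show "bij_betw (from_nat_into M) {..<card M} M"
      using True by (rule bij_betw_from_nat_into_finite)
  qed (use True assms(2) in \<open>simp add: card_gt_0_iff\<close>)
next
  case False
  show thesis
    by (rule that[of UNIV 0 "from_nat_into M"]) (simp_all add: False assms(1) bij_betw_from_nat_into)
qed

lemma openin_subspace_cylinder_family:
  assumes "openin (subtopology cantor_space S) U" "U \<noteq> {}"
  obtains I :: "nat set" and k e where "(I = {..<k} \<and> 0 < k) \<or> I = UNIV"
    "\<And>i. i \<in> I \<Longrightarrow> \<exists>n \<sigma>. e i = S \<inter> cylinder n \<sigma>" "disjoint_family_on e I" "(\<Union>i\<in>I. e i) = U"
proof -
  obtain M where M: "partition_on U M" "countable M"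
    and M_cylinder: "\<And>P. P \<in> M \<Longrightarrow> \<exists>n \<sigma>. P = S \<inter> cylinder n \<sigma>"
    using openin_subspace_cylinder_partition[OF assms(1)] by blast
  then have "M \<noteq> {}"
    using \<open>U \<noteq> {}\<close> by (auto simp: partition_on_def)
  then obtain I :: "nat set" and k e where I: "(I = {..<k} \<and> 0 < k) \<or> I = UNIV"
    and e: "bij_betw e I M"
    using countable_nonempty_enumeration[OF M(2)] by blast
  show thesis
  proof (rule that[OF I])
    fix i assume "i \<in> I"
    then have "e i \<in> M"
      using e by (auto simp: bij_betw_def)
    then show "\<exists>n \<sigma>. e i = S \<inter> cylinder n \<sigma>"
      by (rule M_cylinder)
  next
    show "disjoint_family_on e I"
      using e M(1) disjoint_image_disjoint_family_on[of e I] by (simp add: bij_betw_def partition_on_def)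
    show "(\<Union>i\<in>I. e i) = U"
      using e M(1) by (simp add: bij_betw_def partition_on_def)
  qed
qed

lemma filter_cylinder_family:
  fixes I :: "nat set"
  assumes F: "filter_on_omega F" and I: "(I = {..<k} \<and> 0 < k) \<or> I = UNIV"
  obtains V where "\<And>j. j \<in> I \<Longrightarrow> \<exists>n \<sigma>. V j = char_fun ` F \<inter> cylinder n \<sigma>"
    "disjoint_family_on V I" "(\<Union>j\<in>I. V j) = char_fun ` F"
proof -
  obtain C where C_cylinder: "\<And>j. j \<in> I \<Longrightarrow> \<exists>n \<sigma>. C j = cylinder n \<sigma>"
    and "disjoint_family_on C I" and C_cover: "- {\<lambda>_. False} \<subseteq> (\<Union>j\<in>I. C j)"
    using disjoint_cylinders_cover_nonzero[OF I] by blast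
  have "{} \<notin> F"
    using F by (simp add: filter_on_omega_def)
  then have "char_fun ` F \<subseteq> - {\<lambda>_. False}"
    by (auto simp: char_fun_def fun_eq_iff)
  then have F_cover: "char_fun ` F \<subseteq> (\<Union>j\<in>I. C j)"
    using C_cover by (rule subset_trans)
  show thesis
  proof (rule that[of "\<lambda>j. char_fun ` F \<inter> C j"])
    fix j assume "j \<in> I"
    then obtain n \<sigma> where "C j = cylinder n \<sigma>"
      using C_cylinder by blast
    then show "\<exists>n \<sigma>. char_fun ` F \<inter> C j = char_fun ` F \<inter> cylinder n \<sigma>"
      by blast
  next
    show "disjoint_family_on (\<lambda>j. char_fun ` F \<inter> C j) I"
      using \<open>disjoint_family_on C I\<close> by (auto simp: disjoint_family_on_def)
    show "(\<Union>j\<in>I. char_fun ` F \<inter> C j) = char_fun ` F"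
      using F_cover by auto
  qed
qed

lemma openin_filter_subspace_homeomorphic:
  assumes F: "filter_on_omega F" and "U \<noteq> {}"
    and U: "openin (subtopology cantor_space (char_fun ` F)) U"
  shows "subtopology cantor_space U homeomorphic_space subtopology cantor_space (char_fun ` F)"
proof -
  let ?F = "char_fun ` F"
  have "U \<subseteq> ?F"
    using openin_subset[OF U] by simp
  obtain I :: "nat set" and k e where I: "(I = {..<k} \<and> 0 < k) \<or> I = UNIV"
    and e_cylinder: "\<And>i. i \<in> I \<Longrightarrow> \<exists>n \<sigma>. e i = ?F \<inter> cylinder n \<sigma>"
    and "disjoint_family_on e I" and e_cover: "(\<Union>i\<in>I. e i) = U"
    using openin_subspace_cylinder_family[OF U \<open>U \<noteq> {}\<close>] by blast
  obtain V where V_cylinder: "\<And>j. j \<in> I \<Longrightarrow> \<exists>n \<sigma>. V j = ?F \<inter> cylinder n \<sigma>"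
    and "disjoint_family_on V I" and V_cover: "(\<Union>j\<in>I. V j) = ?F"
    using filter_cylinder_family[OF F I] by blast
  show ?thesis
  proof (rule homeomorphic_space_disjoint_open_covers[where U = e and V = V])
    fix i assume "i \<in> I"
    obtain n \<sigma> where e_i: "e i = ?F \<inter> cylinder n \<sigma>"
      using e_cylinder[OF \<open>i \<in> I\<close>] by blast
    obtain n' \<sigma>' where V_i: "V i = ?F \<inter> cylinder n' \<sigma>'"
      using V_cylinder[OF \<open>i \<in> I\<close>] by blast
    have "e i \<subseteq> U"
      using e_cover \<open>i \<in> I\<close> by blast
    then have "e i = U \<inter> cylinder n \<sigma>"
      using e_i \<open>U \<subseteq> ?F\<close> by blast
    then show "openin (subtopology cantor_space U) (e i)"
      by (simp add: openin_subtopology_Int2 openin_cantor_space_cylinder)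
    show "openin (subtopology cantor_space ?F) (V i)"
      by (simp add: V_i openin_subtopology_Int2 openin_cantor_space_cylinder)
    have "subtopology cantor_space (e i) homeomorphic_space subtopology cantor_space ?F"
      unfolding e_i by (rule filter_cylinder_homeomorphic[OF F])
    also have "\<dots> homeomorphic_space subtopology cantor_space (V i)"
      unfolding V_i using filter_cylinder_homeomorphic[OF F] homeomorphic_space_sym by blast
    finally show "subtopology (subtopology cantor_space U) (e i) homeomorphic_space
        subtopology (subtopology cantor_space ?F) (V i)"
      using \<open>e i \<subseteq> U\<close> by (simp add: subtopology_subtopology Int_absorb1 V_i)
  next
    show "(\<Union>i\<in>I. e i) = topspace (subtopology cantor_space U)"
      using e_cover by simp
    show "(\<Union>i\<in>I. V i) = topspace (subtopology cantor_space ?F)"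
      using V_cover by simp
  qed fact+
qed

theorem proposition13p3:
  fixes F :: "nat set set"
  assumes "filter_on_omega F"
  shows "strongly_homogeneous (subtopology cantor_space (char_fun ` F))"
  unfolding strongly_homogeneous_def
proof (intro allI impI, elim conjE)
  fix U
  assume "U \<noteq> {}" and U: "openin (subtopology cantor_space (char_fun ` F)) U"
  moreover have "U \<subseteq> char_fun ` F"
    using openin_subset[OF U] by simp
  ultimately show "subtopology (subtopology cantor_space (char_fun ` F)) U
      homeomorphic_space subtopology cantor_space (char_fun ` F)"
    using openin_filter_subspace_homeomorphic[OF assms] by (simp add: subtopology_subtopology Int_absorb1)
qed

end
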